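(* In the uKP setting described in the context, fix integers $s,l,m,n$. For $0\le k_2,k_3\le N$ define \[ \Psi(k_2,k_3)=\begin{cases} \max_{0\le i\le N-k_3}\tau_c(N-k_3-i,\,N-k_2+1+i) & (k_3\ge k_2 \text{ and } k_3\ge N-k_2),\\ \max_{0\le i\le k_2}\tau_c(N-k_2-k_3+i,\,N+1-i) & (N-k_2\ge k_3\ge k_2),\\ \max_{0\le i\le N-k_2}\tau_c(N-k_2-i,\,N-k_3+1+i) & (k_2\ge k_3\ge N-k_2),\\ \max_{0\le i\le k_3}\tau_c(N-k_2-k_3+i,\,N+1-i) & (k_2\ge k_3 \text{ and } N-k_2\ge k_3). \end{cases} \] Then \[ \tau(l,m+1,n+1)=\max_{0\le k_2,k_3\le N}\bigl(\Psi(k_2,k_3)-k_2a_2-k_3a_3\bigr), \] and for $1\le k_2,k_3\le N$: $\Psi(k_2-1,k_3)=\max(\Psi(k_2,k_3-1),\ \tau_c(N-k_3+1,N-k_2+1))$ if $k_2>k_3$; $\Psi(k_2-1,k_3)=\Psi(k_2,k_3-1)$ if $k_2=k_3$; $\max(\Psi(k_2-1,k_3),\ \tau_c(N-k_2+1,N-k_3+1))=\Psi(k_2,k_3-1)$ if $k_2<k_3$.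
   Context: Ultradiscrete permanent (UP): for a real $N\times N$ matrix $A=(a_{ij})$, $\max A\equiv\max_{\pi}\sum_{i=1}^N a_{i\pi(i)}$ over all permutations $\pi$ of $\{1,\dots,N\}$; $\max[\bm{b}_1\ \dots\ \bm{b}_N]$ is the UP of the matrix with columns $\bm{b}_j$. uKP setting: $N\ge1$; real parameters $a_1>a_2>a_3$ and arbitrary real $p_i,c_i,c'_i$ ($1\le i\le N$); for integers $l,m,n,s$, $\eta_i(l,m,n,s)=p_is+\max(0,p_i-a_1)l+\max(0,p_i-a_2)m+\max(0,p_i-a_3)n+c_i$, $\eta'_i(l,m,n,s)=-p_is+\max(0,-p_i-a_1)l+\max(0,-p_i-a_2)m+\max(0,-p_i-a_3)n+c'_i$, $\phi_i(l,m,n,s)=\max(\eta_i,\eta'_i)$, and $\tau(l,m,n)=\max[\phi_i(l,m,n,s+j-1)]_{1\le i,j\le N}$ ($s$ an auxiliary fixed integer). With $l,m,n,s$ fixed, put $\bm{\phi}(j)=(\phi_i(l,m,n,s+j))_{1\le i\le N}$, and for distinct $\alpha,\beta\in\{0,\dots,N+1\}$ let $\tau_c(\alpha,\beta)$ be the UP of the $N$ columns $\bm{\phi}(j)$, $j\in\{0,\dots,N+1\}\setminus\{\alpha,\beta\}$, taken in increasing order of $j$ (so $\tau_c(\alpha,\beta)=\tau_c(\beta,\alpha)$). *)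

theory Defs
  imports "HOL-Combinatorics.Permutations" Complex_Main
begin

definition uP :: "nat \<Rightarrow> (nat \<Rightarrow> nat \<Rightarrow> real) \<Rightarrow> real" where
  "uP N A = Max ((\<lambda>\<pi>. \<Sum>i<N. A i (\<pi> i)) ` {\<pi>. \<pi> permutes {..<N}})"

definition eta :: "real \<Rightarrow> real \<Rightarrow> real \<Rightarrow> (nat \<Rightarrow> real) \<Rightarrow> (nat \<Rightarrow> real)
    \<Rightarrow> nat \<Rightarrow> int \<Rightarrow> int \<Rightarrow> int \<Rightarrow> int \<Rightarrow> real" where
  "eta a1 a2 a3 p c i l m n s = p i * of_int s + max 0 (p i - a1) * of_int l
     + max 0 (p i - a2) * of_int m + max 0 (p i - a3) * of_int n + c i"

definition eta' :: "real \<Rightarrow> real \<Rightarrow> real \<Rightarrow> (nat \<Rightarrow> real) \<Rightarrow> (nat \<Rightarrow> real)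
    \<Rightarrow> nat \<Rightarrow> int \<Rightarrow> int \<Rightarrow> int \<Rightarrow> int \<Rightarrow> real" where
  "eta' a1 a2 a3 p c' i l m n s = - p i * of_int s + max 0 (- p i - a1) * of_int l
     + max 0 (- p i - a2) * of_int m + max 0 (- p i - a3) * of_int n + c' i"

definition phi :: "real \<Rightarrow> real \<Rightarrow> real \<Rightarrow> (nat \<Rightarrow> real) \<Rightarrow> (nat \<Rightarrow> real) \<Rightarrow> (nat \<Rightarrow> real)
    \<Rightarrow> nat \<Rightarrow> int \<Rightarrow> int \<Rightarrow> int \<Rightarrow> int \<Rightarrow> real" where
  "phi a1 a2 a3 p c c' i l m n s = max (eta a1 a2 a3 p c i l m n s) (eta' a1 a2 a3 p c' i l m n s)"

text \<open>tau(l,m,n) = UP of [phi_i(l,m,n,s+j-1)]_{1<=i,j<=N}; 0-indexed: entry (i,j) is phi_{i+1}(l,m,n,s+j).\<close>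
definition tau :: "nat \<Rightarrow> real \<Rightarrow> real \<Rightarrow> real \<Rightarrow> (nat \<Rightarrow> real) \<Rightarrow> (nat \<Rightarrow> real) \<Rightarrow> (nat \<Rightarrow> real)
    \<Rightarrow> int \<Rightarrow> int \<Rightarrow> int \<Rightarrow> int \<Rightarrow> real" where
  "tau N a1 a2 a3 p c c' s l m n =
     uP N (\<lambda>i j. phi a1 a2 a3 p c c' (Suc i) l m n (s + int j))"

definition tau_c :: "nat \<Rightarrow> real \<Rightarrow> real \<Rightarrow> real \<Rightarrow> (nat \<Rightarrow> real) \<Rightarrow> (nat \<Rightarrow> real) \<Rightarrow> (nat \<Rightarrow> real)
    \<Rightarrow> int \<Rightarrow> int \<Rightarrow> int \<Rightarrow> int \<Rightarrow> int \<Rightarrow> int \<Rightarrow> real" where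
  "tau_c N a1 a2 a3 p c c' l m n s \<alpha> \<beta> =
     (let cols = filter (\<lambda>j. j \<noteq> \<alpha> \<and> j \<noteq> \<beta>) [0..int N + 1]
      in uP N (\<lambda>i k. phi a1 a2 a3 p c c' (Suc i) l m n (s + cols ! k)))"

text \<open>Psi(k2,k3); overlapping cases resolved by taking the first applicable case.\<close>
definition Psi :: "nat \<Rightarrow> real \<Rightarrow> real \<Rightarrow> real \<Rightarrow> (nat \<Rightarrow> real) \<Rightarrow> (nat \<Rightarrow> real) \<Rightarrow> (nat \<Rightarrow> real)
    \<Rightarrow> int \<Rightarrow> int \<Rightarrow> int \<Rightarrow> int \<Rightarrow> nat \<Rightarrow> nat \<Rightarrow> real" where
  "Psi N a1 a2 a3 p c c' l m n s k2 k3 =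
     (let tc = tau_c N a1 a2 a3 p c c' l m n s; N' = int N; K2 = int k2; K3 = int k3 in
      if k3 \<ge> k2 \<and> K3 \<ge> N' - K2 then
        Max ((\<lambda>i. tc (N' - K3 - int i) (N' - K2 + 1 + int i)) ` {0..N - k3})
      else if N' - K2 \<ge> K3 \<and> k3 \<ge> k2 then
        Max ((\<lambda>i. tc (N' - K2 - K3 + int i) (N' + 1 - int i)) ` {0..k2})
      else if k2 \<ge> k3 \<and> K3 \<ge> N' - K2 then
        Max ((\<lambda>i. tc (N' - K2 - int i) (N' - K3 + 1 + int i)) ` {0..N - k2})
      else
        Max ((\<lambda>i. tc (N' - K2 - K3 + int i) (N' + 1 - int i)) ` {0..k3}))"

end

theory Submission
  imports Defs
begin

text \<open>Raising m and n by one adds max(0, p - a2) + max(0, p - a3) = max(0, p - a3, 2p - a2 - a3)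
  to the slope-p part of every phi_i, so phi_i(l,m+1,n+1,s) is the maximum of phi_i(s),
  phi_i(s+1) - a3 and phi_i(s+2) - a2 - a3. Hence tau(l,m+1,n+1) is a permanent in which column j
  may be shifted by some d_j \<in> {0,1,2}. Each phi_i is convex in s, so an exchange argument between
  neighbouring columns makes the optimal shifts nondecreasing in j; a shift pattern 0..0 1..1 2..2
  is exactly the deletion of two columns \<alpha> < \<beta> from phi(0), ..., phi(N+1), at the cost
  (N+1-\<beta>) a2 + (N-\<alpha>) a3. Psi(k2,k3) collects the pairs with \<alpha> + \<beta> = 2N+1-k2-k3 and
  N+1-\<beta> \<le> min(k2,k3); since a3 < a2, charging such a pair k2 a2 + k3 a3 never undercuts its own
  cost, which gives the formula for tau. The recurrences record how these index sets change
  when one unit moves from k2 to k3.\<close>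

lemma max0_add_max0:
  fixes x a2 a3 :: real
  assumes "a3 \<le> a2"
  shows "max 0 (x - a2) + max 0 (x - a3) = max 0 (max (x - a3) (2 * x - a2 - a3))"
  using assms by (auto simp: max_def)

lemma eta'_eq_eta_uminus: "eta' a1 a2 a3 p c' i l m n s = eta a1 a2 a3 (\<lambda>i. - p i) c' i l m n s"
  unfolding eta_def eta'_def by simp

lemma eta_succ_m_n:
  assumes "a3 \<le> a2"
  shows "eta a1 a2 a3 p c i l (m + 1) (n + 1) s =
    max (eta a1 a2 a3 p c i l m n s)
      (max (eta a1 a2 a3 p c i l m n (s + 1) - a3) (eta a1 a2 a3 p c i l m n (s + 2) - a2 - a3))"
proof -
  have "eta a1 a2 a3 p c i l (m + 1) (n + 1) s
      = eta a1 a2 a3 p c i l m n s + (max 0 (p i - a2) + max 0 (p i - a3))"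
    unfolding eta_def by (simp add: algebra_simps)
  also have "\<dots> = eta a1 a2 a3 p c i l m n s + max 0 (max (p i - a3) (2 * p i - a2 - a3))"
    using max0_add_max0[OF assms] by simp
  also have "\<dots> = max (eta a1 a2 a3 p c i l m n s)
      (max (eta a1 a2 a3 p c i l m n (s + 1) - a3) (eta a1 a2 a3 p c i l m n (s + 2) - a2 - a3))"
    unfolding eta_def by (simp add: algebra_simps max_add_distrib_left max_add_distrib_right)
  finally show ?thesis .
qed

lemma phi_succ_m_n:
  assumes "a3 \<le> a2"
  shows "phi a1 a2 a3 p c c' i l (m + 1) (n + 1) s =
    max (phi a1 a2 a3 p c c' i l m n s)
      (max (phi a1 a2 a3 p c c' i l m n (s + 1) - a3) (phi a1 a2 a3 p c c' i l m n (s + 2) - a2 - a3))"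
  unfolding phi_def eta'_eq_eta_uminus eta_succ_m_n[OF assms] by (simp add: max_def)

lemma phi_midpoint_convex:
  "2 * phi a1 a2 a3 p c c' i l m n x
     \<le> phi a1 a2 a3 p c c' i l m n (x - 1) + phi a1 a2 a3 p c c' i l m n (x + 1)"
proof -
  have "2 * eta a1 a2 a3 q d i l m n x = eta a1 a2 a3 q d i l m n (x - 1) + eta a1 a2 a3 q d i l m n (x + 1)"
    for q d
    unfolding eta_def by (simp add: algebra_simps)
  then show ?thesis
    unfolding phi_def eta'_eq_eta_uminus by (auto simp: max_def)
qed

section \<open>Permanents and column deletion\<close>

lemma col_sum_le_uP:
  assumes "\<rho> permutes {..<N}"
  shows "(\<Sum>j<N. A (\<rho> j) j) \<le> uP N A"
proof -
  have "(\<Sum>j<N. A (\<rho> j) j) = (\<Sum>i<N. A i (inv \<rho> i))"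
    by (rule sum.permutes_inv[OF assms])
  also have "\<dots> \<le> uP N A"
    unfolding uP_def using permutes_inv[OF assms] by (intro Max_ge) (auto simp: finite_permutations)
  finally show ?thesis .
qed

lemma uP_attained_col: "\<exists>\<rho>. \<rho> permutes {..<N} \<and> uP N A = (\<Sum>j<N. A (\<rho> j) j)"
proof -
  have "uP N A \<in> (\<lambda>\<pi>. \<Sum>i<N. A i (\<pi> i)) ` {\<pi>. \<pi> permutes {..<N}}"
    unfolding uP_def by (rule Max_in) (auto simp: finite_permutations permutes_id intro!: exI[of _ id])
  then obtain \<pi> where \<pi>: "\<pi> permutes {..<N}" "uP N A = (\<Sum>i<N. A i (\<pi> i))"
    by auto
  have "(\<Sum>j<N. A (inv \<pi> j) j) = (\<Sum>i<N. A i (\<pi> i))"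
    using sum.permutes_inv[OF permutes_inv[OF \<pi>(1)], of "\<lambda>i j. A i j"]
    by (simp add: permutes_inv_inv[OF \<pi>(1)])
  then show ?thesis
    using \<pi> permutes_inv[OF \<pi>(1)] by auto
qed

definition kept_columns :: "nat \<Rightarrow> int \<Rightarrow> int \<Rightarrow> int list" where
  "kept_columns N \<alpha> \<beta> = filter (\<lambda>j. j \<noteq> \<alpha> \<and> j \<noteq> \<beta>) [0..int N + 1]"

text \<open>After deleting columns a < b of 0, ..., N+1, the j-th kept column is j + column_offset a b j.\<close>
definition column_offset :: "nat \<Rightarrow> nat \<Rightarrow> nat \<Rightarrow> nat" where
  "column_offset a b j = (if j < a then 0 else if j + 1 < b then 1 else 2)"

lemma kept_columns_eq_append:
  assumes "a < b" "b \<le> N + 1"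
  shows "kept_columns N (int a) (int b) = [0..int a - 1] @ [int a + 1..int b - 1] @ [int b + 1..int N + 1]"
proof -
  have "[0..int N + 1] = [0..int a - 1] @ int a # [int a + 1..int N + 1]"
    using assms by (intro upto_split3) auto
  also have "[int a + 1..int N + 1] = [int a + 1..int b - 1] @ int b # [int b + 1..int N + 1]"
    using assms by (intro upto_split3) auto
  finally show ?thesis
    unfolding kept_columns_def using assms by (auto intro!: filter_True)
qed

lemma kept_columns_nth:
  assumes "a < b" "b \<le> N + 1" "j < N"
  shows "kept_columns N (int a) (int b) ! j = int (j + column_offset a b j)"
proof -
  have len: "length [0..int a - 1] = a" "length [int a + 1..int b - 1] = b - 1 - a"
    using assms by auto
  consider "j < a" | "a \<le> j" "j + 1 < b" | "b \<le> j + 1"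
    by linarith
  then show ?thesis
  proof cases
    case 1
    then show ?thesis
      unfolding kept_columns_eq_append[OF assms(1,2)] by (simp add: nth_append len column_offset_def del: length_upto)
  next
    case 2
    then have "[int a + 1..int b - 1] ! (j - a) = int a + 1 + int (j - a)" "j - a < b - 1 - a"
      by (auto intro: nth_upto)
    then show ?thesis
      unfolding kept_columns_eq_append[OF assms(1,2)] using 2
      by (simp add: nth_append len column_offset_def del: length_upto)
  next
    case 3
    then have "[int b + 1..int N + 1] ! (j + 1 - b) = int b + 1 + int (j + 1 - b)"
      using assms by (intro nth_upto) auto
    moreover have "j - a - (b - 1 - a) = j + 1 - b" "\<not> j - a < b - 1 - a"
      using 3 assms by auto
    ultimately show ?thesis
      unfolding kept_columns_eq_append[OF assms(1,2)] using 3 assms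
      by (simp add: nth_append len column_offset_def del: length_upto)
  qed
qed

lemma mono_le_2_eq_column_offset:
  fixes e :: "nat \<Rightarrow> nat"
  assumes le2: "\<forall>j<N. e j \<le> 2" and mono: "\<forall>j. Suc j < N \<longrightarrow> e j \<le> e (Suc j)"
  shows "\<exists>a b. a < b \<and> b \<le> N + 1 \<and> (\<forall>j<N. e j = column_offset a b j)"
proof -
  have mono': "e i \<le> e j" if "i \<le> j" "j < N" for i j
    by (rule lift_Suc_mono_le_ivl[of "{k. Suc k < N}"]) (use mono that in auto)
  define a where "a = (LEAST j. N \<le> j \<or> 1 \<le> e j)"
  define L where "L = (LEAST j. N \<le> j \<or> 2 \<le> e j)"
  have a: "N \<le> a \<or> 1 \<le> e a"
    unfolding a_def by (rule LeastI[of _ N]) simp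
  have L: "N \<le> L \<or> 2 \<le> e L"
    unfolding L_def by (rule LeastI[of _ N]) simp
  have "a \<le> L"
    unfolding a_def using L by (intro Least_le) auto
  moreover have "L \<le> N"
    unfolding L_def by (rule Least_le) simp
  moreover have "e j = column_offset a (Suc L) j" if "j < N" for j
  proof -
    consider "j < a" | "a \<le> j" "j < L" | "L \<le> j"
      by linarith
    then show ?thesis
    proof cases
      case 1
      then have "\<not> (N \<le> j \<or> 1 \<le> e j)"
        unfolding a_def by (rule not_less_Least)
      then show ?thesis using 1 by (simp add: column_offset_def)
    next
      case 2
      then have "\<not> (N \<le> j \<or> 2 \<le> e j)"
        unfolding L_def by (intro not_less_Least) auto
      moreover have "1 \<le> e j"
        using a 2 \<open>j < N\<close> mono'[of a j] by auto
      ultimately show ?thesis using 2 by (simp add: column_offset_def)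
    next
      case 3
      then have "2 \<le> e j"
        using L \<open>j < N\<close> mono'[of L j] by auto
      then show ?thesis
        using 3 \<open>a \<le> L\<close> le2 \<open>j < N\<close> by (auto simp: column_offset_def)
    qed
  qed
  ultimately show ?thesis
    by (intro exI[of _ a] exI[of _ "Suc L"]) auto
qed

lemma sum_agree_off_two:
  fixes f g :: "'a \<Rightarrow> 'b::comm_monoid_add"
  assumes "finite A" "x \<in> A" "y \<in> A" "x \<noteq> y" "\<And>k. k \<in> A \<Longrightarrow> k \<noteq> x \<Longrightarrow> k \<noteq> y \<Longrightarrow> f k = g k"
  shows "sum f A + (g x + g y) = sum g A + (f x + f y)"
proof -
  have split: "sum h A = h x + h y + sum h (A - {x, y})" for h :: "'a \<Rightarrow> 'b"
  proof -
    have "sum h A = h x + sum h (A - {x})"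
      using assms by (intro sum.remove) auto
    also have "sum h (A - {x}) = h y + sum h (A - {x} - {y})"
      using assms by (intro sum.remove) auto
    also have "A - {x} - {y} = A - {x, y}"
      by auto
    finally show ?thesis by (simp add: add.assoc)
  qed
  have "sum f (A - {x, y}) = sum g (A - {x, y})"
    using assms(5) by (intro sum.cong) auto
  then show ?thesis
    unfolding split[of f] split[of g] by (simp add: ac_simps)
qed

section \<open>Permanents of band matrices with convex rows\<close>

text \<open>The rows P i play the role of s \<mapsto> phi_(i+1)(s); band i j is the entry of the permanent
  for tau(l,m+1,n+1) in terms of the columns for (l,m,n).\<close>
locale convex_rows =
  fixes N :: nat and P :: "nat \<Rightarrow> int \<Rightarrow> real" and a2 a3 :: real
  assumes row_convex: "2 * P i x \<le> P i (x - 1) + P i (x + 1)"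
    and a3_le_a2: "a3 \<le> a2"
begin

definition weight :: "nat \<Rightarrow> real" where
  "weight d = (if d = 0 then 0 else if d = 1 then a3 else a2 + a3)"

definition band :: "nat \<Rightarrow> nat \<Rightarrow> real" where
  "band i j = max (P i (int j)) (max (P i (int j + 1) - a3) (P i (int j + 2) - a2 - a3))"

definition deleted :: "int \<Rightarrow> int \<Rightarrow> real" where
  "deleted \<alpha> \<beta> = uP N (\<lambda>i k. P i (kept_columns N \<alpha> \<beta> ! k))"

text \<open>Column j of a permanent term is placed in row \<rho> j and shifted by e j.\<close>
definition cost :: "(nat \<Rightarrow> nat) \<Rightarrow> (nat \<Rightarrow> nat) \<Rightarrow> nat \<Rightarrow> real" where
  "cost \<rho> e j = P (\<rho> j) (int j + int (e j)) - weight (e j)"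

definition gain :: "(nat \<Rightarrow> nat) \<Rightarrow> (nat \<Rightarrow> nat) \<Rightarrow> real" where
  "gain \<rho> e = (\<Sum>j<N. cost \<rho> e j)"

definition advance :: "(nat \<Rightarrow> nat) \<Rightarrow> nat \<Rightarrow> nat \<Rightarrow> nat" where
  "advance e j = e(j := e j - 1, Suc j := e (Suc j) + 1)"

lemma band_ge: "d \<le> 2 \<Longrightarrow> P i (int j + int d) - weight d \<le> band i j"
  by (auto simp: band_def weight_def le_Suc_eq numeral_2_eq_2)

lemma band_attained: "\<exists>d \<le> 2. band i j = P i (int j + int d) - weight d"
proof -
  have "band i j = P i (int j + int 0) - weight 0 \<or> band i j = P i (int j + int 1) - weight 1
      \<or> band i j = P i (int j + int 2) - weight 2"
    by (simp add: band_def weight_def max_def)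
  then show ?thesis
    by (metis le_numeral_extra(3) one_le_numeral order_refl zero_le)
qed

lemma weight_sum_column_offset:
  assumes "a < b" "b \<le> N + 1"
  shows "(\<Sum>j<N. weight (column_offset a b j)) = real (N + 1 - b) * a2 + real (N - a) * a3"
proof -
  have "(\<Sum>j<N. weight (column_offset a b j)) = (\<Sum>j=0..<a. weight (column_offset a b j))
      + (\<Sum>j=a..<b - 1. weight (column_offset a b j)) + (\<Sum>j=b - 1..<N. weight (column_offset a b j))"
    using assms by (simp add: sum.atLeastLessThan_concat lessThan_atLeast0)
  moreover have "(\<Sum>j=0..<a. weight (column_offset a b j)) = 0"
    by (simp add: column_offset_def weight_def)
  moreover have "(\<Sum>j=a..<b - 1. weight (column_offset a b j)) = (\<Sum>j=a..<b - 1. a3)"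
    by (rule sum.cong) (auto simp: column_offset_def weight_def)
  moreover have "(\<Sum>j=b - 1..<N. weight (column_offset a b j)) = (\<Sum>j=b - 1..<N. a2 + a3)"
    using assms by (intro sum.cong) (auto simp: column_offset_def weight_def)
  ultimately show ?thesis
    using assms by (simp add: algebra_simps of_nat_diff)
qed

lemma gain_column_offset:
  assumes "a < b" "b \<le> N + 1"
  shows "gain \<rho> (column_offset a b)
    = (\<Sum>j<N. P (\<rho> j) (kept_columns N (int a) (int b) ! j)) - (real (N + 1 - b) * a2 + real (N - a) * a3)"
  unfolding gain_def cost_def sum_subtractf weight_sum_column_offset[OF assms, symmetric]
  using kept_columns_nth[OF assms] by simp

lemma gain_le_uP_band:
  assumes "\<rho> permutes {..<N}" "\<forall>j<N. e j \<le> 2"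
  shows "gain \<rho> e \<le> uP N band"
proof -
  have "gain \<rho> e \<le> (\<Sum>j<N. band (\<rho> j) j)"
    unfolding gain_def cost_def using assms(2) by (intro sum_mono band_ge) auto
  also have "\<dots> \<le> uP N band"
    by (rule col_sum_le_uP[OF assms(1)])
  finally show ?thesis .
qed

lemma uP_band_eq_gain: "\<exists>\<rho> e. \<rho> permutes {..<N} \<and> (\<forall>j. e j \<le> 2) \<and> uP N band = gain \<rho> e"
proof -
  obtain \<rho> where \<rho>: "\<rho> permutes {..<N}" "uP N band = (\<Sum>j<N. band (\<rho> j) j)"
    using uP_attained_col by blast
  have "\<forall>j. \<exists>d. d \<le> 2 \<and> band (\<rho> j) j = P (\<rho> j) (int j + int d) - weight d"
    using band_attained by blast
  then obtain e where e: "\<And>j. e j \<le> 2" "\<And>j. band (\<rho> j) j = P (\<rho> j) (int j + int (e j)) - weight (e j)"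
    by metis
  show ?thesis
    using \<rho> e unfolding gain_def cost_def by auto
qed

lemma P_pair_convex:
  "P a x + P b x \<le> max (P a (x - 1) + P b (x + 1)) (P b (x - 1) + P a (x + 1))"
  using row_convex[of a x] row_convex[of b x] by (simp add: max_def)

text \<open>Moving one unit of shift from column j to column j + 1 never loses, after possibly swapping
  the rows of these two columns: by convexity when the shifts differ by one, and by a3 \<le> a2
  when they are 2 and 0.\<close>
lemma cost_exchange:
  assumes "e j \<le> 2" "e (Suc j) < e j"
  shows "\<exists>r \<in> {\<rho>, \<rho> \<circ> Transposition.transpose j (Suc j)}.
    cost \<rho> e j + cost \<rho> e (Suc j) \<le> cost r (advance e j) j + cost r (advance e j) (Suc j)"
proof -
  define \<sigma> where "\<sigma> = \<rho> \<circ> Transposition.transpose j (Suc j)"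
  have \<sigma>: "\<sigma> j = \<rho> (Suc j)" "\<sigma> (Suc j) = \<rho> j"
    unfolding \<sigma>_def by auto
  have adv: "advance e j j = e j - 1" "advance e j (Suc j) = e (Suc j) + 1"
    unfolding advance_def by auto
  consider "e j = e (Suc j) + 1" | "e j = 2" "e (Suc j) = 0"
    using assms by linarith
  then show ?thesis
  proof cases
    case 1
    define x where "x = int j + int (e j)"
    have old: "cost \<rho> e j + cost \<rho> e (Suc j)
        = P (\<rho> j) x + P (\<rho> (Suc j)) x - (weight (e j) + weight (e (Suc j)))"
      unfolding cost_def x_def using 1 by (simp add: algebra_simps)
    have new: "cost r (advance e j) j + cost r (advance e j) (Suc j)
        = P (r j) (x - 1) + P (r (Suc j)) (x + 1) - (weight (e j) + weight (e (Suc j)))" for r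
      unfolding cost_def adv x_def using 1 by (simp add: algebra_simps)
    consider "P (\<rho> j) x + P (\<rho> (Suc j)) x \<le> P (\<rho> j) (x - 1) + P (\<rho> (Suc j)) (x + 1)"
      | "P (\<rho> j) x + P (\<rho> (Suc j)) x \<le> P (\<rho> (Suc j)) (x - 1) + P (\<rho> j) (x + 1)"
      using P_pair_convex[of "\<rho> j" x "\<rho> (Suc j)"] by (metis le_max_iff_disj)
    then show ?thesis
    proof cases
      case 1
      then show ?thesis
        unfolding \<sigma>_def[symmetric] old new by (intro bexI[of _ \<rho>]) auto
    next
      case 2
      then show ?thesis
        unfolding \<sigma>_def[symmetric] old new by (intro bexI[of _ \<sigma>]) (auto simp: \<sigma>)
    qed
  next
    case 2
    then show ?thesis
      unfolding \<sigma>_def[symmetric] using a3_le_a2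
      by (intro bexI[of _ \<sigma>]) (simp_all add: cost_def adv \<sigma> weight_def add.commute)
  qed
qed

lemma gain_advance:
  assumes \<rho>: "\<rho> permutes {..<N}" and j: "Suc j < N" and "e j \<le> 2" "e (Suc j) < e j"
  shows "\<exists>\<rho>'. \<rho>' permutes {..<N} \<and> gain \<rho> e \<le> gain \<rho>' (advance e j)"
proof -
  obtain r where r: "r \<in> {\<rho>, \<rho> \<circ> Transposition.transpose j (Suc j)}"
    and le: "cost \<rho> e j + cost \<rho> e (Suc j) \<le> cost r (advance e j) j + cost r (advance e j) (Suc j)"
    using cost_exchange[OF assms(3,4)] by blast
  have "\<rho> \<circ> Transposition.transpose j (Suc j) permutes {..<N}"
    using j by (intro permutes_compose[OF _ \<rho>] permutes_swap_id) auto
  then have "r permutes {..<N}"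
    using r \<rho> by auto
  moreover have "gain r (advance e j) + (cost \<rho> e j + cost \<rho> e (Suc j))
      = gain \<rho> e + (cost r (advance e j) j + cost r (advance e j) (Suc j))"
    unfolding gain_def using j r by (intro sum_agree_off_two) (auto simp: cost_def advance_def)
  ultimately show ?thesis
    using le by (intro exI[of _ r]) auto
qed

lemma potential_advance:
  assumes "Suc j < N" "1 \<le> e j"
  shows "(\<Sum>k<N. (N - k) * advance e j k) < (\<Sum>k<N. (N - k) * e k)"
proof -
  obtain u where u: "N - j = Suc u" "N - Suc j = u"
    using assms(1) by (metis Suc_diff_Suc Suc_lessD)
  obtain d where d: "e j = Suc d"
    using assms(2) by (metis Suc_le_D One_nat_def)
  have "(\<Sum>k<N. (N - k) * advance e j k) + ((N - j) * e j + (N - Suc j) * e (Suc j))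
      = (\<Sum>k<N. (N - k) * e k) + ((N - j) * advance e j j + (N - Suc j) * advance e j (Suc j))"
    using assms(1) by (intro sum_agree_off_two) (auto simp: advance_def)
  moreover have "(N - j) * advance e j j + (N - Suc j) * advance e j (Suc j)
      < (N - j) * e j + (N - Suc j) * e (Suc j)"
    unfolding u advance_def using d by simp
  ultimately show ?thesis
    by linarith
qed

lemma gain_le_monotone_gain:
  "\<rho> permutes {..<N} \<Longrightarrow> \<forall>j<N. e j \<le> 2 \<Longrightarrow>
   \<exists>\<rho>' e'. \<rho>' permutes {..<N} \<and> (\<forall>j<N. e' j \<le> 2) \<and> (\<forall>j. Suc j < N \<longrightarrow> e' j \<le> e' (Suc j))
     \<and> gain \<rho> e \<le> gain \<rho>' e'"
proof (induction "\<Sum>k<N. (N - k) * e k" arbitrary: \<rho> e rule: less_induct)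
  case less
  show ?case
  proof (cases "\<forall>j. Suc j < N \<longrightarrow> e j \<le> e (Suc j)")
    case True
    then show ?thesis
      using less.prems by blast
  next
    case False
    then obtain j where j: "Suc j < N" "e (Suc j) < e j"
      by (auto simp: not_le)
    have "e j \<le> 2"
      using less.prems(2) j(1) by simp
    then obtain \<rho>' where \<rho>': "\<rho>' permutes {..<N}" "gain \<rho> e \<le> gain \<rho>' (advance e j)"
      using gain_advance[OF less.prems(1) j(1) _ j(2)] by blast
    have "\<forall>k<N. advance e j k \<le> 2"
      using less.prems(2) j(2) \<open>e j \<le> 2\<close> by (auto simp: advance_def)
    moreover have "(\<Sum>k<N. (N - k) * advance e j k) < (\<Sum>k<N. (N - k) * e k)"
      using j by (intro potential_advance) auto
    ultimately obtain \<rho>'' e'' where "\<rho>'' permutes {..<N}" "\<forall>j<N. e'' j \<le> 2"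
      "\<forall>j. Suc j < N \<longrightarrow> e'' j \<le> e'' (Suc j)" "gain \<rho>' (advance e j) \<le> gain \<rho>'' e''"
      using less.hyps[OF _ \<rho>'(1)] by blast
    then show ?thesis
      using \<rho>'(2) by (intro exI[of _ \<rho>''] exI[of _ e'']) auto
  qed
qed

lemma deleted_le_band:
  assumes "a < b" "b \<le> N + 1"
  shows "deleted (int a) (int b) - (real (N + 1 - b) * a2 + real (N - a) * a3) \<le> uP N band"
proof -
  obtain \<rho> where \<rho>: "\<rho> permutes {..<N}"
    "deleted (int a) (int b) = (\<Sum>j<N. P (\<rho> j) (kept_columns N (int a) (int b) ! j))"
    using uP_attained_col unfolding deleted_def by blast
  then have "deleted (int a) (int b) - (real (N + 1 - b) * a2 + real (N - a) * a3)
      = gain \<rho> (column_offset a b)"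
    using gain_column_offset[OF assms] by simp
  also have "\<dots> \<le> uP N band"
    by (rule gain_le_uP_band[OF \<rho>(1)]) (simp add: column_offset_def)
  finally show ?thesis .
qed

lemma band_le_deleted:
  "\<exists>a b. a < b \<and> b \<le> N + 1
     \<and> uP N band \<le> deleted (int a) (int b) - (real (N + 1 - b) * a2 + real (N - a) * a3)"
proof -
  obtain \<rho> e where \<rho>e: "\<rho> permutes {..<N}" "\<forall>j. e j \<le> 2" "uP N band = gain \<rho> e"
    using uP_band_eq_gain by blast
  then have "\<forall>j<N. e j \<le> 2"
    by simp
  then obtain \<rho>' e' where \<rho>': "\<rho>' permutes {..<N}" "\<forall>j<N. e' j \<le> 2"
    "\<forall>j. Suc j < N \<longrightarrow> e' j \<le> e' (Suc j)" "gain \<rho> e \<le> gain \<rho>' e'"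
    using gain_le_monotone_gain[OF \<rho>e(1)] by blast
  obtain a b where ab: "a < b" "b \<le> N + 1" "\<forall>j<N. e' j = column_offset a b j"
    using mono_le_2_eq_column_offset[OF \<rho>'(2,3)] by blast
  have "gain \<rho>' e' = gain \<rho>' (column_offset a b)"
    unfolding gain_def cost_def using ab(3) by simp
  also have "\<dots> \<le> deleted (int a) (int b) - (real (N + 1 - b) * a2 + real (N - a) * a3)"
    unfolding gain_column_offset[OF ab(1,2)] deleted_def using col_sum_le_uP[OF \<rho>'(1)] by simp
  finally show ?thesis
    using ab(1,2) \<rho>'(4) \<rho>e(3) by (intro exI[of _ a] exI[of _ b]) simp
qed

end

section \<open>The index sets of Psi\<close>

text \<open>Psi(k2,k3) is the maximum of tau_c over these pairs; the four cases of its definition are the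
  explicit parametrizations below (with k2, k3 in either order).\<close>
definition Psi_pairs :: "nat \<Rightarrow> nat \<Rightarrow> nat \<Rightarrow> (int \<times> int) set" where
  "Psi_pairs N k2 k3 = {(\<alpha>, \<beta>). 0 \<le> \<alpha> \<and> \<alpha> < \<beta> \<and> \<beta> \<le> int N + 1
     \<and> \<alpha> + \<beta> = 2 * int N + 1 - int k2 - int k3 \<and> int N + 1 - int (min k2 k3) \<le> \<beta>}"

lemma Psi_pairs_commute: "Psi_pairs N k2 k3 = Psi_pairs N k3 k2"
  unfolding Psi_pairs_def by (simp add: min.commute algebra_simps)

lemma finite_Psi_pairs: "finite (Psi_pairs N k2 k3)"
  by (rule finite_subset[of _ "{0..int N + 1} \<times> {0..int N + 1}"]) (auto simp: Psi_pairs_def)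

lemma Psi_pairs_corner:
  "k2 \<le> N \<Longrightarrow> k3 \<le> N \<Longrightarrow> (int N - int (max k2 k3), int N + 1 - int (min k2 k3)) \<in> Psi_pairs N k2 k3"
  unfolding Psi_pairs_def by (auto simp: min_def max_def)

lemma Psi_pairs_wide:
  assumes "k \<le> k'" "k' \<le> N" "N \<le> k + k'"
  shows "Psi_pairs N k k' = (\<lambda>i. (int N - int k' - int i, int N - int k + 1 + int i)) ` {0..N - k'}"
proof (intro set_eqI iffI)
  fix x
  assume "x \<in> Psi_pairs N k k'"
  then obtain \<alpha> \<beta> where x: "x = (\<alpha>, \<beta>)" "0 \<le> \<alpha>" "\<alpha> + \<beta> = 2 * int N + 1 - int k - int k'"
    "int N + 1 - int k \<le> \<beta>"
    using assms unfolding Psi_pairs_def by (auto simp: min_def)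
  then show "x \<in> (\<lambda>i. (int N - int k' - int i, int N - int k + 1 + int i)) ` {0..N - k'}"
    using assms by (intro image_eqI[where x = "nat (\<beta> - (int N + 1 - int k))"]) auto
qed (use assms in \<open>auto simp: Psi_pairs_def min_def\<close>)

lemma Psi_pairs_narrow:
  assumes "k \<le> k'" "k + k' \<le> N"
  shows "Psi_pairs N k k' = (\<lambda>i. (int N - int k - int k' + int i, int N + 1 - int i)) ` {0..k}"
proof (intro set_eqI iffI)
  fix x
  assume "x \<in> Psi_pairs N k k'"
  then obtain \<alpha> \<beta> where x: "x = (\<alpha>, \<beta>)" "\<beta> \<le> int N + 1" "\<alpha> + \<beta> = 2 * int N + 1 - int k - int k'"
    "int N + 1 - int k \<le> \<beta>"
    using assms unfolding Psi_pairs_def by (auto simp: min_def)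
  then show "x \<in> (\<lambda>i. (int N - int k - int k' + int i, int N + 1 - int i)) ` {0..k}"
    using assms by (intro image_eqI[where x = "nat (int N + 1 - \<beta>)"]) auto
qed (use assms in \<open>auto simp: Psi_pairs_def min_def\<close>)

lemma Psi_pairs_pred_left:
  assumes "1 \<le> k3" "k3 < k2" "k2 \<le> N"
  shows "Psi_pairs N (k2 - 1) k3 = insert (int N + 1 - int k2, int N + 1 - int k3) (Psi_pairs N k2 (k3 - 1))"
  using assms unfolding Psi_pairs_def by (auto simp: min_def of_nat_diff)

lemma Psi_pairs_cost_le:
  fixes a2 a3 :: real
  assumes "a3 \<le> a2" "(int a, int b) \<in> Psi_pairs N k2 k3"
  shows "real (N + 1 - b) * a2 + real (N - a) * a3 \<le> real k2 * a2 + real k3 * a3"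
proof -
  have "a < b" "b \<le> N + 1" "a + b = 2 * N + 1 - k2 - k3" "N + 1 - min k2 k3 \<le> b"
    using assms(2) unfolding Psi_pairs_def by auto
  then have k: "real (N - a) = real k2 + real k3 - real (N + 1 - b)" and "real (N + 1 - b) \<le> real k2"
    by auto
  then have "0 \<le> (real k2 - real (N + 1 - b)) * (a2 - a3)"
    using assms(1) by simp
  then show ?thesis
    unfolding k by (simp add: algebra_simps)
qed

section \<open>Psi and its recurrences\<close>

context
  fixes N :: nat and a1 a2 a3 :: real and p c c' :: "nat \<Rightarrow> real" and l m n s :: int
begin

lemma tau_c_commute: "tau_c N a1 a2 a3 p c c' l m n s \<alpha> \<beta> = tau_c N a1 a2 a3 p c c' l m n s \<beta> \<alpha>"
  unfolding tau_c_def by (simp add: conj_commute)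

lemma Psi_eq_Max_Psi_pairs:
  assumes "k2 \<le> N" "k3 \<le> N"
  shows "Psi N a1 a2 a3 p c c' l m n s k2 k3
    = Max ((\<lambda>(\<alpha>, \<beta>). tau_c N a1 a2 a3 p c c' l m n s \<alpha> \<beta>) ` Psi_pairs N k2 k3)"
proof -
  consider "k2 \<le> k3" "N \<le> k2 + k3" | "k2 \<le> k3" "k2 + k3 < N" | "k3 < k2" "N \<le> k2 + k3"
    | "k3 < k2" "k2 + k3 < N"
    by linarith
  then show ?thesis
  proof cases
    case 1
    then show ?thesis
      using assms by (simp add: Psi_def Let_def Psi_pairs_wide image_image)
  next
    case 2
    then show ?thesis
      using assms by (simp add: Psi_def Let_def Psi_pairs_narrow image_image)
  next
    case 3
    then show ?thesis
      using assms by (simp add: Psi_def Let_def Psi_pairs_commute[of N k2] Psi_pairs_wide image_image)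
  next
    case 4
    then show ?thesis
      using assms by (simp add: Psi_def Let_def Psi_pairs_commute[of N k2] Psi_pairs_narrow image_image algebra_simps)
  qed
qed

lemma Psi_commute:
  "k2 \<le> N \<Longrightarrow> k3 \<le> N \<Longrightarrow> Psi N a1 a2 a3 p c c' l m n s k2 k3 = Psi N a1 a2 a3 p c c' l m n s k3 k2"
  by (simp add: Psi_eq_Max_Psi_pairs Psi_pairs_commute[of N k2])

lemma Psi_attained:
  assumes "k2 \<le> N" "k3 \<le> N"
  obtains \<alpha> \<beta> where "(\<alpha>, \<beta>) \<in> Psi_pairs N k2 k3"
    "Psi N a1 a2 a3 p c c' l m n s k2 k3 = tau_c N a1 a2 a3 p c c' l m n s \<alpha> \<beta>"
proof -
  have "Psi N a1 a2 a3 p c c' l m n s k2 k3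
      \<in> (\<lambda>(\<alpha>, \<beta>). tau_c N a1 a2 a3 p c c' l m n s \<alpha> \<beta>) ` Psi_pairs N k2 k3"
    unfolding Psi_eq_Max_Psi_pairs[OF assms]
    using finite_Psi_pairs Psi_pairs_corner[OF assms] by (intro Max_in) auto
  then show ?thesis
    using that by auto
qed

lemma Psi_ge:
  assumes "k2 \<le> N" "k3 \<le> N" "(\<alpha>, \<beta>) \<in> Psi_pairs N k2 k3"
  shows "tau_c N a1 a2 a3 p c c' l m n s \<alpha> \<beta> \<le> Psi N a1 a2 a3 p c c' l m n s k2 k3"
  unfolding Psi_eq_Max_Psi_pairs[OF assms(1,2)] using finite_Psi_pairs assms(3) by (intro Max_ge) force+

lemma Psi_pred_left:
  assumes "1 \<le> k3" "k3 < k2" "k2 \<le> N"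
  shows "Psi N a1 a2 a3 p c c' l m n s (k2 - 1) k3 = max (Psi N a1 a2 a3 p c c' l m n s k2 (k3 - 1))
    (tau_c N a1 a2 a3 p c c' l m n s (int N - int k3 + 1) (int N - int k2 + 1))"
proof -
  let ?f = "\<lambda>(\<alpha>, \<beta>). tau_c N a1 a2 a3 p c c' l m n s \<alpha> \<beta>"
  have "k3 - 1 \<le> N"
    using assms by simp
  then have nonempty: "Psi_pairs N k2 (k3 - 1) \<noteq> {}"
    using Psi_pairs_corner[OF assms(3)] by blast
  have "Psi N a1 a2 a3 p c c' l m n s (k2 - 1) k3 = Max (?f ` Psi_pairs N (k2 - 1) k3)"
    using assms by (intro Psi_eq_Max_Psi_pairs) auto
  also have "\<dots> = max (tau_c N a1 a2 a3 p c c' l m n s (int N + 1 - int k2) (int N + 1 - int k3))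
      (Max (?f ` Psi_pairs N k2 (k3 - 1)))"
    unfolding Psi_pairs_pred_left[OF assms] using finite_Psi_pairs nonempty by simp
  also have "Max (?f ` Psi_pairs N k2 (k3 - 1)) = Psi N a1 a2 a3 p c c' l m n s k2 (k3 - 1)"
    using assms by (intro Psi_eq_Max_Psi_pairs[symmetric]) auto
  also have "tau_c N a1 a2 a3 p c c' l m n s (int N + 1 - int k2) (int N + 1 - int k3)
      = tau_c N a1 a2 a3 p c c' l m n s (int N - int k3 + 1) (int N - int k2 + 1)"
    by (subst tau_c_commute) (simp add: algebra_simps)
  finally show ?thesis
    by (simp add: max.commute)
qed

lemma Psi_recurrences:
  assumes "k2 \<in> {1..N}" "k3 \<in> {1..N}"
  shows "(k2 > k3 \<longrightarrow> Psi N a1 a2 a3 p c c' l m n s (k2 - 1) k3 =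
            max (Psi N a1 a2 a3 p c c' l m n s k2 (k3 - 1))
              (tau_c N a1 a2 a3 p c c' l m n s (int N - int k3 + 1) (int N - int k2 + 1)))
       \<and> (k2 = k3 \<longrightarrow> Psi N a1 a2 a3 p c c' l m n s (k2 - 1) k3 = Psi N a1 a2 a3 p c c' l m n s k2 (k3 - 1))
       \<and> (k2 < k3 \<longrightarrow> max (Psi N a1 a2 a3 p c c' l m n s (k2 - 1) k3)
              (tau_c N a1 a2 a3 p c c' l m n s (int N - int k2 + 1) (int N - int k3 + 1))
            = Psi N a1 a2 a3 p c c' l m n s k2 (k3 - 1))"
proof (intro conjI impI)
  show "k3 < k2 \<Longrightarrow> Psi N a1 a2 a3 p c c' l m n s (k2 - 1) k3 =
      max (Psi N a1 a2 a3 p c c' l m n s k2 (k3 - 1))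
        (tau_c N a1 a2 a3 p c c' l m n s (int N - int k3 + 1) (int N - int k2 + 1))"
    using assms by (intro Psi_pred_left) auto
  show "k2 = k3 \<Longrightarrow> Psi N a1 a2 a3 p c c' l m n s (k2 - 1) k3 = Psi N a1 a2 a3 p c c' l m n s k2 (k3 - 1)"
    using assms Psi_commute[of "k2 - 1" k3] by auto
  assume "k2 < k3"
  then have "Psi N a1 a2 a3 p c c' l m n s (k3 - 1) k2 =
      max (Psi N a1 a2 a3 p c c' l m n s k3 (k2 - 1))
        (tau_c N a1 a2 a3 p c c' l m n s (int N - int k2 + 1) (int N - int k3 + 1))"
    using assms by (intro Psi_pred_left) auto
  moreover have "Psi N a1 a2 a3 p c c' l m n s (k3 - 1) k2 = Psi N a1 a2 a3 p c c' l m n s k2 (k3 - 1)"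
    "Psi N a1 a2 a3 p c c' l m n s k3 (k2 - 1) = Psi N a1 a2 a3 p c c' l m n s (k2 - 1) k3"
    using assms by (auto intro: Psi_commute)
  ultimately show "max (Psi N a1 a2 a3 p c c' l m n s (k2 - 1) k3)
      (tau_c N a1 a2 a3 p c c' l m n s (int N - int k2 + 1) (int N - int k3 + 1))
    = Psi N a1 a2 a3 p c c' l m n s k2 (k3 - 1)"
    by simp
qed

lemma tau_succ_m_n_eq_Max_Psi:
  assumes "a3 \<le> a2"
  shows "tau N a1 a2 a3 p c c' s l (m + 1) (n + 1)
    = Max ((\<lambda>(k2, k3). Psi N a1 a2 a3 p c c' l m n s k2 k3 - real k2 * a2 - real k3 * a3)
        ` ({0..N} \<times> {0..N}))"
proof -
  interpret convex_rows N "\<lambda>i x. phi a1 a2 a3 p c c' (Suc i) l m n (s + x)" a2 a3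
  proof unfold_locales
    fix i x
    show "2 * phi a1 a2 a3 p c c' (Suc i) l m n (s + x)
        \<le> phi a1 a2 a3 p c c' (Suc i) l m n (s + (x - 1)) + phi a1 a2 a3 p c c' (Suc i) l m n (s + (x + 1))"
      using phi_midpoint_convex[of a1 a2 a3 p c c' "Suc i" l m n "s + x"] by (simp add: algebra_simps)
  qed (rule assms)
  have tau_eq: "tau N a1 a2 a3 p c c' s l (m + 1) (n + 1) = uP N band"
    unfolding tau_def band_def phi_succ_m_n[OF assms] by (simp add: add.assoc)
  have deleted_eq: "deleted = tau_c N a1 a2 a3 p c c' l m n s"
    unfolding deleted_def tau_c_def kept_columns_def by (simp add: fun_eq_iff)
  let ?F = "(\<lambda>(k2, k3). Psi N a1 a2 a3 p c c' l m n s k2 k3 - real k2 * a2 - real k3 * a3)"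
  show ?thesis
    unfolding tau_eq
  proof (rule antisym)
    obtain a b where ab: "a < b" "b \<le> N + 1"
      "uP N band \<le> deleted (int a) (int b) - (real (N + 1 - b) * a2 + real (N - a) * a3)"
      using band_le_deleted by blast
    have "(int a, int b) \<in> Psi_pairs N (N + 1 - b) (N - a)"
      using ab unfolding Psi_pairs_def by (auto simp: min_def)
    then have "uP N band \<le> ?F (N + 1 - b, N - a)"
      using ab Psi_ge[of "N + 1 - b" "N - a"] unfolding deleted_eq by fastforce
    also have "\<dots> \<le> Max (?F ` ({0..N} \<times> {0..N}))"
      using ab by (intro Max_ge) (auto intro!: image_eqI[where x = "(N + 1 - b, N - a)"])
    finally show "uP N band \<le> Max (?F ` ({0..N} \<times> {0..N}))" .
  next
    have "?F (k2, k3) \<le> uP N band" if k: "k2 \<le> N" "k3 \<le> N" for k2 k3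
    proof -
      obtain \<alpha> \<beta> where \<alpha>\<beta>: "(\<alpha>, \<beta>) \<in> Psi_pairs N k2 k3"
        "Psi N a1 a2 a3 p c c' l m n s k2 k3 = tau_c N a1 a2 a3 p c c' l m n s \<alpha> \<beta>"
        using Psi_attained[OF k] by blast
      then obtain a b where ab: "\<alpha> = int a" "\<beta> = int b" "a < b" "b \<le> N + 1"
        unfolding Psi_pairs_def by (auto intro!: that[of "nat \<alpha>" "nat \<beta>"])
      show ?thesis
        using deleted_le_band[OF ab(3,4)] Psi_pairs_cost_le[OF assms, of a b N k2 k3] \<alpha>\<beta>
        unfolding deleted_eq ab by simp
    qed
    then show "Max (?F ` ({0..N} \<times> {0..N})) \<le> uP N band"
      by (intro Max.boundedI) auto
  qed
qed

end

theorem lemma7: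
  fixes N :: nat and a1 a2 a3 :: real and p c c' :: "nat \<Rightarrow> real"
    and l m n s :: int
  assumes "N \<ge> 1" and "a1 > a2" and "a2 > a3"
  shows "tau N a1 a2 a3 p c c' s l (m + 1) (n + 1) =
           Max ((\<lambda>(k2, k3). Psi N a1 a2 a3 p c c' l m n s k2 k3 - real k2 * a2 - real k3 * a3)
                  ` ({0..N} \<times> {0..N}))
       \<and> (\<forall>k2 \<in> {1..N}. \<forall>k3 \<in> {1..N}.
            (k2 > k3 \<longrightarrow> Psi N a1 a2 a3 p c c' l m n s (k2 - 1) k3 =
                max (Psi N a1 a2 a3 p c c' l m n s k2 (k3 - 1))
                    (tau_c N a1 a2 a3 p c c' l m n s (int N - int k3 + 1) (int N - int k2 + 1)))
          \<and> (k2 = k3 \<longrightarrow> Psi N a1 a2 a3 p c c' l m n s (k2 - 1) k3 =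
                Psi N a1 a2 a3 p c c' l m n s k2 (k3 - 1))
          \<and> (k2 < k3 \<longrightarrow> max (Psi N a1 a2 a3 p c c' l m n s (k2 - 1) k3)
                    (tau_c N a1 a2 a3 p c c' l m n s (int N - int k2 + 1) (int N - int k3 + 1))
                = Psi N a1 a2 a3 p c c' l m n s k2 (k3 - 1)))"
proof (rule conjI)
  show "tau N a1 a2 a3 p c c' s l (m + 1) (n + 1) =
      Max ((\<lambda>(k2, k3). Psi N a1 a2 a3 p c c' l m n s k2 k3 - real k2 * a2 - real k3 * a3)
        ` ({0..N} \<times> {0..N}))"
    using assms(3) by (intro tau_succ_m_n_eq_Max_Psi) simp
qed (intro ballI, rule Psi_recurrences)

end
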